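(* Let $S$ be a polyhedron in $\mathbb{R}^{n+m}$ with points written $(x,y)$, $x\in\mathbb{R}^n$, $y\in\mathbb{R}^m$, and let $j,k\in\{1,\dots,m\}$. Suppose that every $(x,y)\in\operatorname{vert}(S)\cup\operatorname{vert}\bigl(S\cap\{(x,y)\mid y_j=y_k\}\bigr)$ satisfies $y\in\mathbb{Z}^m$. Let $\hat S=\{(x,y,\delta)\in S\times\mathbb{R}\mid y_j\le\delta\le y_k\}$ and assume $\hat S\neq\emptyset$. Then $\operatorname{proj}_{(y,\delta)}\bigl(\operatorname{vert}(\hat S)\bigr)\subseteq\mathbb{Z}^{m+1}$.
   Context: $\operatorname{vert}(S)$ denotes the set of extreme points of $S$, and $\operatorname{proj}_{(y,\delta)}$ is the projection onto the $(y,\delta)$ coordinates. *)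

theory Defs
  imports "HOL-Analysis.Analysis"
begin

end

theory Submission
  imports Defs
begin

text \<open>
  At an extreme point \<open>(p, \<delta>)\<close> of the lifted set, \<open>\<delta>\<close> sits on one of its bounds \<open>y\<^sub>j\<close>,
  \<open>y\<^sub>k\<close>, since otherwise it could be moved both ways. A point of a convex set is extreme iff
  it admits no symmetric perturbation \<open>p \<plusminus> w\<close> with \<open>w \<noteq> 0\<close>, and such a perturbation of \<open>p\<close>
  lifts to one of \<open>(p, \<delta>)\<close>: if \<open>y\<^sub>j = y\<^sub>k\<close> at \<open>p\<close>, a perturbation inside the hyperplane
  \<open>y\<^sub>j = y\<^sub>k\<close> lifts by moving \<open>\<delta>\<close> along with \<open>y\<^sub>j\<close>; if \<open>y\<^sub>j < y\<^sub>k\<close>, any perturbation inside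
  \<open>S\<close>, scaled down so that the strict inequality survives, lifts by moving \<open>\<delta>\<close> along the
  active bound. Hence \<open>p\<close> is extreme in \<open>S\<close> or in \<open>S \<inter> {y\<^sub>j = y\<^sub>k}\<close>, so \<open>y\<close> is integral,
  and so is \<open>\<delta> \<in> {y\<^sub>j, y\<^sub>k}\<close>.
\<close>

lemma extreme_point_of_plus_minus_eq_0:
  fixes z v :: "'a::real_vector"
  assumes "z extreme_point_of T" "z + v \<in> T" "z - v \<in> T"
  shows "v = 0"
proof (rule ccontr)
  assume "v \<noteq> 0"
  then have "z + v \<noteq> z - v"
    by (metis add_cancel_right_right add_diff_eq diff_add_cancel scaleR_2 scaleR_eq_0_iff
        zero_neq_numeral)
  moreover have "midpoint (z + v) (z - v) = z"
    by (simp add: midpoint_def algebra_simps flip: scaleR_2)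
  ultimately have "z \<in> open_segment (z + v) (z - v)"
    by (metis midpoint_in_open_segment)
  with assms show False
    unfolding extreme_point_of_def by blast
qed

lemma extreme_point_ofI_plus_minus:
  fixes z :: "'a::real_vector"
  assumes "convex T" "z \<in> T"
    and no_perturbation: "\<And>v. z + v \<in> T \<Longrightarrow> z - v \<in> T \<Longrightarrow> v = 0"
  shows "z extreme_point_of T"
  unfolding extreme_point_of_def
proof (intro conjI ballI notI)
  fix a b assume ab: "a \<in> T" "b \<in> T" "z \<in> open_segment a b"
  then obtain u where u: "a \<noteq> b" "0 < u" "u < 1" "z = (1 - u) *\<^sub>R a + u *\<^sub>R b"
    by (auto simp: in_segment)
  define t where "t = min u (1 - u)"
  have t: "0 < t" "t \<le> u" "t \<le> 1 - u"
    using u by (auto simp: t_def)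
  have "z + r *\<^sub>R t *\<^sub>R (b - a) \<in> T" if "\<bar>r\<bar> = 1" for r
  proof -
    have "\<bar>r * t\<bar> \<le> t"
      using that t by (simp add: abs_mult)
    then have "0 \<le> u + r * t" "u + r * t \<le> 1"
      using t by linarith+
    moreover have "z + r *\<^sub>R t *\<^sub>R (b - a) = (1 - (u + r * t)) *\<^sub>R a + (u + r * t) *\<^sub>R b"
      using u by (simp add: algebra_simps)
    ultimately have "z + r *\<^sub>R t *\<^sub>R (b - a) \<in> closed_segment a b"
      unfolding in_segment by blast
    then show ?thesis
      using closed_segment_subset \<open>convex T\<close> ab by blast
  qed
  from this[of 1] this[of "-1"] have "t *\<^sub>R (b - a) = 0"
    by (intro no_perturbation) simp_all
  with t u show False
    by simp
qed (fact \<open>z \<in> T\<close>)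

lemma convex_plus_minus_scaleR:
  fixes z v :: "'a::real_vector"
  assumes "convex T" "z + v \<in> T" "z - v \<in> T" "\<bar>r\<bar> \<le> 1"
  shows "z + r *\<^sub>R v \<in> T"
proof -
  have "z + r *\<^sub>R v = ((1 + r) / 2 + (1 - r) / 2) *\<^sub>R z + ((1 + r) / 2 - (1 - r) / 2) *\<^sub>R v"
    by (simp add: diff_divide_distrib[symmetric] add_divide_distrib[symmetric])
  also have "\<dots> = ((1 + r) / 2) *\<^sub>R (z + v) + ((1 - r) / 2) *\<^sub>R (z - v)"
    by (simp add: algebra_simps)
  also have "\<dots> \<in> T"
    using assms by (intro convexD) (auto simp flip: add_divide_distrib)
  finally show ?thesis .
qed

definition between_graphs :: "'a set \<Rightarrow> ('a \<Rightarrow> real) \<Rightarrow> ('a \<Rightarrow> real) \<Rightarrow> ('a \<times> real) set"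
  where "between_graphs S f g = {(p, d). p \<in> S \<and> f p \<le> d \<and> d \<le> g p}"

lemma extreme_point_of_between_graphs_on_graph:
  fixes S :: "'a::real_vector set"
  assumes "(p, d) extreme_point_of between_graphs S f g"
  shows "d = f p \<or> d = g p"
proof (rule ccontr)
  have mem: "p \<in> S" "f p \<le> d" "d \<le> g p"
    using assms by (auto simp: extreme_point_of_def between_graphs_def)
  assume "\<not> (d = f p \<or> d = g p)"
  define e where "e = min (d - f p) (g p - d)"
  have "0 < e"
    using mem \<open>\<not> (d = f p \<or> d = g p)\<close> by (auto simp: e_def)
  have "(p, d) + (0, e) \<in> between_graphs S f g" "(p, d) - (0, e) \<in> between_graphs S f g"
    using mem by (auto simp: between_graphs_def e_def)
  then have "(0::'a, e) = 0"
    by (rule extreme_point_of_plus_minus_eq_0[OF assms])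
  with \<open>0 < e\<close> show False
    by (simp add: zero_prod_def)
qed

lemma extreme_point_of_between_graphs_diagonal:
  fixes S :: "'a::real_vector set"
  assumes "convex S" "linear f" "linear g"
    and extreme: "(p, d) extreme_point_of between_graphs S f g" and "f p = g p"
  shows "p extreme_point_of (S \<inter> {p. f p = g p})"
proof (rule extreme_point_ofI_plus_minus)
  have "subspace {p. f p - g p = 0}"
    using assms(2,3) by (intro linear_subspace_kernel linear_compose_sub)
  then show "convex (S \<inter> {p. f p = g p})"
    by (simp add: \<open>convex S\<close> convex_Int subspace_imp_convex)
  have mem: "p \<in> S" "d = f p"
    using extreme \<open>f p = g p\<close> by (auto simp: extreme_point_of_def between_graphs_def)
  then show "p \<in> S \<inter> {p. f p = g p}"
    using \<open>f p = g p\<close> by simp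
  fix w assume "p + w \<in> S \<inter> {p. f p = g p}" "p - w \<in> S \<inter> {p. f p = g p}"
  then have "(p, d) + (w, f w) \<in> between_graphs S f g" "(p, d) - (w, f w) \<in> between_graphs S f g"
    using mem assms(2,3) by (auto simp: between_graphs_def linear_add linear_diff)
  then have "(w, f w) = 0"
    by (rule extreme_point_of_plus_minus_eq_0[OF extreme])
  then show "w = 0"
    by (simp add: zero_prod_def)
qed

lemma extreme_point_of_between_graphs_strict:
  fixes S :: "'a::real_vector set"
  assumes "convex S" "linear f" "linear g"
    and extreme: "(p, d) extreme_point_of between_graphs S f g" and "f p < g p"
  shows "p extreme_point_of S"
proof (rule extreme_point_ofI_plus_minus[OF \<open>convex S\<close>])
  show "p \<in> S"
    using extreme by (auto simp: extreme_point_of_def between_graphs_def)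
  have on_graph: "d = f p \<or> d = g p"
    using extreme_point_of_between_graphs_on_graph[OF extreme] .
  fix w assume w: "p + w \<in> S" "p - w \<in> S"
  define G where "G = g p - f p"
  define s where "s = G / (G + \<bar>f w - g w\<bar>)"
  have G: "0 < G"
    using \<open>f p < g p\<close> by (simp add: G_def)
  then have s: "0 < s" "s \<le> 1" "s * \<bar>f w - g w\<bar> \<le> G"
    by (auto simp: s_def field_simps)
  \<comment> \<open>\<open>d\<close> moves along the bound it sits on; the other bound has slack \<open>G\<close>.\<close>
  define c where "c = (if d = f p then f w else g w)"
  have lift: "(p + r *\<^sub>R w, d + r * c) \<in> between_graphs S f g" if "\<bar>r\<bar> \<le> s" for r
  proof -
    have "p + r *\<^sub>R w \<in> S"
      using convex_plus_minus_scaleR[OF \<open>convex S\<close> w] that s by simp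
    moreover have "\<bar>r * (f w - g w)\<bar> \<le> s * \<bar>f w - g w\<bar>"
      using that by (simp add: abs_mult mult_right_mono)
    then have "\<bar>r * (f w - g w)\<bar> \<le> G"
      using s by linarith
    ultimately show ?thesis
      using on_graph assms(2,3) unfolding between_graphs_def c_def G_def
      by (auto simp: linear_add linear_scale abs_le_iff algebra_simps)
  qed
  have "(p, d) + (s *\<^sub>R w, s * c) \<in> between_graphs S f g"
    using lift[of s] s by simp
  moreover have "(p, d) - (s *\<^sub>R w, s * c) \<in> between_graphs S f g"
    using lift[of "-s"] s by simp
  ultimately have "(s *\<^sub>R w, s * c) = 0"
    by (rule extreme_point_of_plus_minus_eq_0[OF extreme])
  then show "w = 0"
    using s by (simp add: zero_prod_def)
qed

lemma extreme_point_of_between_graphs: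
  fixes S :: "'a::real_vector set"
  assumes "convex S" "linear f" "linear g"
    and extreme: "(p, d) extreme_point_of between_graphs S f g"
  shows "(d = f p \<or> d = g p)
    \<and> (p extreme_point_of S \<or> p extreme_point_of (S \<inter> {p. f p = g p}))"
proof -
  have "f p \<le> g p"
    using extreme by (auto simp: extreme_point_of_def between_graphs_def)
  then show ?thesis
    using extreme_point_of_between_graphs_on_graph[OF extreme]
      extreme_point_of_between_graphs_diagonal[OF assms]
      extreme_point_of_between_graphs_strict[OF assms]
    by fastforce
qed

theorem lemma3p3:
  fixes S :: "((real ^ 'n) \<times> (real ^ 'm)) set"
    and j k :: 'm
  assumes "polyhedron S"
    and "\<And>x y. (x, y) extreme_point_of S
              \<or> (x, y) extreme_point_of (S \<inter> {(x', y'). y' $ j = y' $ k})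
              \<Longrightarrow> (\<forall>i. y $ i \<in> \<int>)"
    and "{((x, y), d). (x, y) \<in> S \<and> y $ j \<le> d \<and> d \<le> y $ k} \<noteq> {}"
  shows "\<forall>x y d. ((x, y), d) extreme_point_of
              {((x, y), d). (x, y) \<in> S \<and> y $ j \<le> d \<and> d \<le> y $ k}
            \<longrightarrow> (\<forall>i. y $ i \<in> \<int>) \<and> d \<in> \<int>"
proof (intro allI impI)
  fix x y d
  let ?f = "\<lambda>p::(real ^ 'n) \<times> (real ^ 'm). snd p $ j"
  let ?g = "\<lambda>p::(real ^ 'n) \<times> (real ^ 'm). snd p $ k"
  have linear: "linear ?f" "linear ?g"
    by (intro bounded_linear.linear bounded_linear_compose[OF bounded_linear_vec_nth]
        bounded_linear_snd)+
  have "{((x, y), d). (x, y) \<in> S \<and> y $ j \<le> d \<and> d \<le> y $ k} = between_graphs S ?f ?g"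
    and "{p. ?f p = ?g p} = {(x', y'). y' $ j = y' $ k}"
    by (auto simp: between_graphs_def)
  moreover assume "((x, y), d) extreme_point_of
    {((x, y), d). (x, y) \<in> S \<and> y $ j \<le> d \<and> d \<le> y $ k}"
  ultimately have "(d = y $ j \<or> d = y $ k)
    \<and> ((x, y) extreme_point_of S \<or> (x, y) extreme_point_of (S \<inter> {(x', y'). y' $ j = y' $ k}))"
    using extreme_point_of_between_graphs[OF polyhedron_imp_convex[OF assms(1)] linear]
    by fastforce
  with assms(2) show "(\<forall>i. y $ i \<in> \<int>) \<and> d \<in> \<int>"
    by blast
qed

end
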